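(* Let $m$ be a positive integer and let $0\le a<m$ be an integer that is a sum of $3$ squares modulo $m$ (i.e. $z_1^2+z_2^2+z_3^2\equiv a\pmod m$ for some integers $z_i$). Then there exists a square-free integer $a'\in[1,5m]$ such that $a'$ is a sum of $3$ squares modulo $m$ and such that the following implication holds: if there exist a constant $c>0$ and infinitely many positive integers $n'\equiv a' \pmod m$ with $r_3(n')\ge c\sqrt{n'}\log\log n'$, then there exist a constant $c'>0$ depending only on $c$ and $m$ and infinitely many positive integers $n\equiv a\pmod m$ with $r_3(n)\ge c'\sqrt{n}\log\log n$.
   Context: For a positive integer $n$, $r_3(n) := |\{(x,y,z)\in\mathbb{Z}^3 : x^2+y^2+z^2=n\}|$. *)

theory Defs
  imports Complex_Main "HOL-Number_Theory.Cong" "HOL-Computational_Algebra.Squarefree"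
begin

definition r3 :: "nat \<Rightarrow> nat" where
  "r3 n = card {p :: int \<times> int \<times> int. (fst p)^2 + (fst (snd p))^2 + (snd (snd p))^2 = int n}"

definition sum3sq_mod :: "int \<Rightarrow> int \<Rightarrow> bool" where
  "sum3sq_mod m a \<longleftrightarrow> (\<exists>z1 z2 z3 :: int. [z1^2 + z2^2 + z3^2 = a] (mod m))"

definition many_large :: "int \<Rightarrow> int \<Rightarrow> real \<Rightarrow> bool" where
  "many_large m a c \<longleftrightarrow>
     infinite {n :: nat. n > 0 \<and> [int n = a] (mod m) \<and>
                 real (r3 n) \<ge> c * sqrt (real n) * ln (ln (real n))}"

end

(*
  Among a, a + m, a + 2m, a + 3m there is an N >= 1 that is not of the form 4^i (8l + 7):
  writing m = 2^e q with q odd, adding multiples of m adjusts the odd part of N modulo 4, and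
  the one configuration this cannot repair (a = 4^i (8l + 7) with 4^i * 8 dividing m) is
  excluded because a is a sum of three squares modulo m.  Write N = k^2 s with s squarefree.
  Then s is neither 0 mod 4 nor 7 mod 8, so s is a sum of three squares modulo every power of
  2 (Hensel lifting of a square root of a number that is 1 mod 8) and modulo every odd number
  (there -1 is a sum of two squares, by pigeonhole and Hensel), hence modulo m by the Chinese
  remainder theorem.  Finally n |-> k^2 n sends n = s to k^2 n = a (mod m), does not decrease
  r_3, multiplies sqrt n by k < 4m and at most doubles log log n; so C c = c / (8m) works.
*)
theory Submission
  imports Defs
begin

section \<open>Numbers of the form \<open>4^i (8l + 7)\<close>\<close>

lemma square_mod_8: "(x::int)^2 mod 8 \<in> {0, 1, 4}"
proof -
  have "x^2 mod 8 = (x mod 8)^2 mod 8" by (simp add: power_mod)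
  moreover have "x mod 8 \<in> {0, 1, 2, 3, 4, 5, 6, 7}" by auto
  ultimately show ?thesis by auto
qed

lemma odd_square_mod_8:
  assumes "odd (x::int)"
  shows "x^2 mod 8 = 1"
proof -
  have "y mod 8 = 1" if "odd y" "y mod 8 \<in> {0, 1, 4}" for y :: int
    using that by auto presburger+
  then show ?thesis using assms square_mod_8[of x] by simp
qed

lemma square_mod_4: "(x::int)^2 mod 4 = (if even x then 0 else 1)"
proof -
  have "x^2 mod 4 = (x mod 4)^2 mod 4" by (simp add: power_mod)
  moreover have "x mod 4 \<in> {0, 1, 2, 3}" by auto
  moreover have "even x \<longleftrightarrow> even (x mod 4)" by presburger
  ultimately show ?thesis by auto
qed

definition legendre_form :: "int \<Rightarrow> bool" where
  "legendre_form N \<longleftrightarrow> (\<exists>i l. N = 4^i * (8*l + 7))"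

lemma pow2_mult_odd_eqD:
  fixes u w :: int
  assumes "2^e * u = 2^f * w" "odd u" "odd w"
  shows "e = f \<and> u = w"
proof -
  have "multiplicity 2 (2^e * u) = e" "multiplicity 2 (2^f * w) = f"
    using assms(2,3) by (auto intro!: multiplicity_decomposeI)
  then show ?thesis using assms(1) by simp
qed

lemma legendre_form_pow2_mult_odd_iff:
  fixes u :: int
  assumes "odd u"
  shows "legendre_form (2^e * u) \<longleftrightarrow> even e \<and> u mod 8 = 7"
proof
  assume "legendre_form (2^e * u)"
  then obtain i l where "2^e * u = 2^(2*i) * (8*l + 7)"
    unfolding legendre_form_def by (auto simp: power_mult)
  from pow2_mult_odd_eqD[OF this assms] show "even e \<and> u mod 8 = 7" by auto
next
  assume e: "even e \<and> u mod 8 = 7"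
  then obtain i where "e = 2*i" by blast
  then have "2^e = (4::int)^i" by (simp add: power_mult)
  moreover have "u = 8*(u div 8) + 7" using e by presburger
  ultimately have "2^e * u = 4^i * (8*(u div 8) + 7)" by simp
  then show "legendre_form (2^e * u)" unfolding legendre_form_def by blast
qed

lemma legendre_form_mult_square:
  fixes N k :: int
  assumes "legendre_form N" "k \<noteq> 0"
  shows "legendre_form (k^2 * N)"
proof -
  obtain i l where N: "N = 4^i * (8*l + 7)" using assms(1) unfolding legendre_form_def by blast
  define j where "j = multiplicity 2 k"
  obtain v where k: "k = 2^j * v" "odd v"
    using multiplicity_decompose'[of k 2] assms(2) unfolding j_def by (simp, blast)
  define r where "r = v^2 div 8"
  have r: "v^2 = 8*r + 1"
    using odd_square_mod_8[OF k(2)] div_mult_mod_eq[of "v^2" 8] unfolding r_def by linarith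
  have "k^2 = 4^j * v^2"
    using k(1) by (simp add: power_mult_distrib flip: power_even_eq add: power_mult)
  then have "k^2 * N = 4^(j + i) * (8*(r*(8*l + 7) + l) + 7)"
    using N r by (simp add: power_add algebra_simps)
  then show ?thesis unfolding legendre_form_def by blast
qed

lemma sum3sq_mod_neq_legendre_form:
  fixes M N :: int
  assumes "sum3sq_mod M N" "4^i * 8 dvd M"
  shows "N \<noteq> 4^i * (8*l + 7)"
  using assms
proof (induction i arbitrary: N M)
  case 0
  obtain x y z where "[x^2 + y^2 + z^2 = N] (mod M)" using 0 unfolding sum3sq_mod_def by blast
  then have "[x^2 + y^2 + z^2 = N] (mod 8)" using 0 cong_dvd_modulus by auto
  then have "N mod 8 = (x^2 mod 8 + y^2 mod 8 + z^2 mod 8) mod 8"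
    unfolding cong_def by (metis mod_add_left_eq mod_add_right_eq)
  then have "N mod 8 \<noteq> 7" using square_mod_8[of x] square_mod_8[of y] square_mod_8[of z] by auto
  then show ?case by auto
next
  case (Suc i)
  show ?case
  proof
    assume N: "N = 4^Suc i * (8*l + 7)"
    obtain x y z where xyz: "[x^2 + y^2 + z^2 = N] (mod M)"
      using Suc.prems(1) unfolding sum3sq_mod_def by blast
    obtain M' where M: "M = 4 * M'" and M': "4^i * 8 dvd M'"
      using Suc.prems(2) by (auto simp: dvd_def mult.assoc)
    have "[x^2 + y^2 + z^2 = N] (mod 4)" using xyz M by (metis cong_dvd_modulus dvd_triv_left)
    then have "(x^2 + y^2 + z^2) mod 4 = 0" using N unfolding cong_def by simp
    then have "(x^2 mod 4 + y^2 mod 4 + z^2 mod 4) mod 4 = 0"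
      by (metis mod_add_left_eq mod_add_right_eq)
    then have "even x \<and> even y \<and> even z" unfolding square_mod_4 by (auto split: if_splits)
    then obtain x' y' z' where "x = 2*x'" "y = 2*y'" "z = 2*z'" by (auto elim!: evenE)
    then have "4 * M' dvd 4 * (x'^2 + y'^2 + z'^2 - 4^i * (8*l + 7))"
      using xyz N M by (simp add: cong_iff_dvd_diff power_mult_distrib algebra_simps)
    then have "sum3sq_mod M' (4^i * (8*l + 7))"
      unfolding sum3sq_mod_def cong_iff_dvd_diff by (metis dvd_mult_cancel_left zero_neq_numeral)
    with Suc.IH M' show False by blast
  qed
qed

lemma exists_shift_not_legendre_form_of_pow2_dvd:
  fixes m q b :: int
  assumes m: "m = 2^e * q" "0 < m" and q: "odd q" and b: "0 \<le> b"
  shows "\<exists>t\<in>{0..3}. 1 \<le> 2^e * b + t*m \<and> \<not> legendre_form (2^e * b + t*m)"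
proof -
  define t where "t = ((1 - b) * q) mod 4"
  define u where "u = b + t*q"
  have "[t = (1 - b) * q] (mod 4)" unfolding t_def by (simp add: cong_def)
  then have "[u = b + (1 - b) * (q * q)] (mod 4)"
    unfolding u_def mult.assoc[symmetric] by (rule cong_add[OF cong_refl cong_mult[OF _ cong_refl]])
  moreover have "[q * q = 1] (mod 4)"
    using square_mod_4[of q] q by (simp add: cong_def power2_eq_square)
  then have "[b + (1 - b) * (q * q) = b + (1 - b) * 1] (mod 4)"
    by (rule cong_add[OF cong_refl cong_mult[OF cong_refl]])
  ultimately have u4: "u mod 4 = 1" unfolding cong_def by simp
  have "0 < q" using m by (simp add: zero_less_mult_iff)
  then have "0 \<le> u" unfolding u_def t_def using b by simp
  with u4 have "1 \<le> u" by presburger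
  have "odd u" "u mod 8 \<noteq> 7" using u4 by presburger+
  then have "\<not> legendre_form (2^e * u)" by (simp add: legendre_form_pow2_mult_odd_iff)
  moreover have "1 \<le> 2^e * u" using mult_mono[of 1 "2^e" 1 u] \<open>1 \<le> u\<close> by simp
  moreover have "2^e * u = 2^e * b + t*m" unfolding u_def m by (simp add: algebra_simps)
  moreover have "t \<in> {0..3}" unfolding t_def by simp
  ultimately show ?thesis by auto
qed

lemma not_legendre_form_add_modulus:
  fixes m q l :: int
  assumes m: "m = 2^e * q" and q: "odd q" and e: "2*i < e" "e < 2*i + 3"
  shows "\<not> legendre_form (4^i * (8*l + 7) + m)"
proof -
  define w where "w = 8*l + 7 + 2^(e - 2*i) * q"
  have "e - 2*i = 1 \<or> e - 2*i = 2" using e by auto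
  then have "odd w" "w mod 8 \<noteq> 7" unfolding w_def using q by (auto, presburger+)
  have "(2::int)^e = 2^(2*i) * 2^(e - 2*i)"
    using e(1) by (simp flip: power_add)
  moreover have "(2::int)^(2*i) = 4^i" by (simp add: power_mult)
  ultimately have "4^i * (8*l + 7) + m = 2^(2*i) * w"
    unfolding w_def m by (simp add: algebra_simps)
  with \<open>odd w\<close> \<open>w mod 8 \<noteq> 7\<close> show ?thesis by (simp add: legendre_form_pow2_mult_odd_iff)
qed

lemma exists_cong_not_legendre_form:
  fixes m a :: int
  assumes m: "0 < m" and a: "0 \<le> a" "a < m" and sum3: "sum3sq_mod m a"
  shows "\<exists>N. 1 \<le> N \<and> N < 4*m \<and> [N = a] (mod m) \<and> \<not> legendre_form N"
proof -
  define e where "e = multiplicity 2 m"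
  obtain q where mq: "m = 2^e * q" and q: "odd q"
    using multiplicity_decompose'[of m 2] m unfolding e_def by (simp, blast)
  have "\<exists>t\<in>{0..3}. 1 \<le> a + t*m \<and> \<not> legendre_form (a + t*m)"
  proof (cases "2^e dvd a")
    case True
    then obtain b where b: "a = 2^e * b" by blast
    with a have "0 \<le> b" by (simp add: zero_le_mult_iff)
    with exists_shift_not_legendre_form_of_pow2_dvd[OF mq m q] show ?thesis by (simp add: b)
  next
    case pow2_ndvd: False
    show ?thesis
    proof (cases "legendre_form a")
      case False
      moreover have "a \<noteq> 0" using pow2_ndvd by auto
      ultimately show ?thesis using a by (intro bexI[of _ 0]) auto
    next
      case True
      then obtain i l where il: "a = 4^i * (8*l + 7)" unfolding legendre_form_def by blast
      have pow4: "(2::int)^(2*i) = 4^i" by (simp add: power_mult)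
      have "2*i < e"
      proof (rule ccontr)
        assume "\<not> 2*i < e"
        then have "(2::int)^e dvd 4^i" unfolding pow4[symmetric] by (simp add: le_imp_power_dvd)
        then show False using pow2_ndvd il by simp
      qed
      moreover have "e < 2*i + 3"
      proof (rule ccontr)
        assume "\<not> e < 2*i + 3"
        then have "(2::int)^(2*i + 3) dvd m" unfolding mq by (simp add: le_imp_power_dvd)
        then have "4^i * 8 dvd m" by (simp add: power_add pow4)
        then show False using sum3sq_mod_neq_legendre_form[OF sum3] il by blast
      qed
      ultimately have "\<not> legendre_form (a + m)"
        unfolding il by (rule not_legendre_form_add_modulus[OF mq q])
      then show ?thesis using a m by (intro bexI[of _ 1]) auto
    qed
  qed
  then obtain t where t: "t \<in> {0..3}" "1 \<le> a + t*m" "\<not> legendre_form (a + t*m)" by blast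
  have "t*m \<le> 3*m" using t(1) m by (intro mult_right_mono) auto
  then have "a + t*m < 4*m" using a by linarith
  moreover have "[a + t*m = a] (mod m)" by (simp add: cong_iff_dvd_diff)
  ultimately show ?thesis using t by blast
qed

section \<open>Sums of three squares modulo \<open>m\<close>\<close>

lemma odd_square_root_mod_pow2:
  fixes r :: int
  assumes "r mod 8 = 1"
  shows "\<exists>x. odd x \<and> [x^2 = r] (mod 2^e)"
proof (induction e)
  case 0
  show ?case by (intro exI[of _ 1]) simp
next
  case (Suc e)
  show ?case
  proof (cases "e < 3")
    case True
    then have "(2::int)^Suc e dvd 2^3" by (intro le_imp_power_dvd) simp
    moreover have "[1 = r] (mod 8)" using assms by (simp add: cong_def)
    ultimately have "[1^2 = r] (mod 2^Suc e)" using cong_dvd_modulus by auto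
    then show ?thesis by (intro exI[of _ 1]) simp
  next
    case False
    from Suc.IH obtain x c where x: "odd x" and c: "x^2 - r = 2^e * c"
      by (auto simp: cong_iff_dvd_diff elim!: dvdE)
    show ?thesis
    proof (cases "even c")
      case True
      then obtain c' where "c = 2 * c'" by blast
      with c have "x^2 - r = 2^Suc e * c'" by simp
      with x show ?thesis unfolding cong_iff_dvd_diff by (blast intro: dvdI)
    next
      case False
      \<comment> \<open>Shifting \<open>x\<close> by \<open>2^(e-1)\<close> adds \<open>2^e x\<close>, which cancels the odd part \<open>2^e c\<close>;
        the square of the shift is divisible by \<open>2^(e+1)\<close> because \<open>e \<ge> 3\<close>.\<close>
      define y where "y = x + 2^(e - 1)"
      have "(e - 1) + (e - 1) = Suc e + (e - 3)" using \<open>\<not> e < 3\<close> by simp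
      then have sq_shift: "(2::int)^(e - 1) * 2^(e - 1) = 2^Suc e * 2^(e - 3)" by (metis power_add)
      have double_shift: "(2::int)^(e - 1) * 2 = 2^e"
        using \<open>\<not> e < 3\<close> by (simp flip: power_Suc2)
      have "even (c + x)" using False x by simp
      then obtain g where g: "c + x = 2 * g" by blast
      have "y^2 - r = (x^2 - r) + 2^(e - 1) * 2 * x + 2^(e - 1) * 2^(e - 1)"
        unfolding y_def power2_eq_square by algebra
      also have "\<dots> = 2^e * (c + x) + 2^Suc e * 2^(e - 3)"
        unfolding c sq_shift double_shift by (simp add: distrib_left)
      also have "\<dots> = 2^Suc e * (g + 2^(e - 3))"
        unfolding g by (simp add: algebra_simps)
      finally have "[y^2 = r] (mod 2^Suc e)" unfolding cong_iff_dvd_diff by (rule dvdI)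
      moreover have "odd y" unfolding y_def using x \<open>\<not> e < 3\<close> by simp
      ultimately show ?thesis by blast
    qed
  qed
qed

lemma sum3sq_mod_pow2:
  fixes s :: int
  assumes "s mod 4 \<noteq> 0" "s mod 8 \<noteq> 7"
  shows "sum3sq_mod (2^e) s"
proof -
  obtain a b :: int where "(s - a^2 - b^2) mod 8 = 1"
  proof -
    have "s mod 8 = 1 \<or> s mod 8 = 2 \<or> s mod 8 = 3 \<or> s mod 8 = 5 \<or> s mod 8 = 6"
      using assms by presburger
    then consider "s mod 8 = 1" | "s mod 8 = 2" | "s mod 8 = 3" | "s mod 8 = 5" | "s mod 8 = 6"
      by blast
    then show thesis
    proof cases
      case 1
      then show thesis using that[of 0 0] by simp
    next
      case 2
      then have "(s - 1^2 - 0^2) mod 8 = 1" by (simp; presburger)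
      then show thesis by (rule that)
    next
      case 3
      then have "(s - 1^2 - 1^2) mod 8 = 1" by (simp; presburger)
      then show thesis by (rule that)
    next
      case 4
      then have "(s - 2^2 - 0^2) mod 8 = 1" by (simp; presburger)
      then show thesis by (rule that)
    next
      case 5
      then have "(s - 2^2 - 1^2) mod 8 = 1" by (simp; presburger)
      then show thesis by (rule that)
    qed
  qed
  from odd_square_root_mod_pow2[OF this] obtain x where "[x^2 = s - a^2 - b^2] (mod 2^e)" by blast
  then have "[x^2 + a^2 + b^2 = s] (mod 2^e)" by (simp add: cong_iff_dvd_diff algebra_simps)
  then show ?thesis unfolding sum3sq_mod_def by blast
qed

lemma prime_square_cong_imp_eq:
  fixes p x y :: int
  assumes p: "prime p" and x: "0 \<le> x" "2*x < p" and y: "0 \<le> y" "2*y < p"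
    and cong: "[x^2 = y^2] (mod p)"
  shows "x = y"
proof (rule ccontr)
  assume "x \<noteq> y"
  have "p dvd (x - y) * (x + y)"
    using cong by (simp add: cong_iff_dvd_diff power2_eq_square algebra_simps)
  then have "p dvd x - y \<or> p dvd x + y" using p by (simp add: prime_dvd_mult_iff)
  moreover have "x - y \<noteq> 0" "x + y \<noteq> 0" using \<open>x \<noteq> y\<close> x y by auto
  ultimately have "\<bar>p\<bar> \<le> \<bar>x - y\<bar> \<or> \<bar>p\<bar> \<le> \<bar>x + y\<bar>"
    using dvd_imp_le_int[of "x - y" p] dvd_imp_le_int[of "x + y" p] by blast
  then show False using x y by linarith
qed

lemma prime_dvd_two_squares_plus_one:
  fixes p :: int
  assumes p: "prime p" "odd p"
  shows "\<exists>c d. p dvd c^2 + d^2 + 1"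
proof -
  \<comment> \<open>Pigeonhole: the \<open>H + 1\<close> residues \<open>x^2\<close> and the \<open>H + 1\<close> residues \<open>-1 - y^2\<close>
    (\<open>0 \<le> x, y \<le> H\<close>) cannot be disjoint among the \<open>p = 2H + 1\<close> residues.\<close>
  define H where "H = (p - 1) div 2"
  have "0 < p" using p(1) by (rule prime_gt_0_int)
  have "p = 2*H + 1" using p(2) unfolding H_def by presburger
  with \<open>0 < p\<close> have H: "p = 2*H + 1" "0 \<le> H" by linarith+
  have half: "0 \<le> x \<and> 2*x < p" if "x \<in> {0..H}" for x using that H by auto
  have inj_sq: "inj_on (\<lambda>x. x^2 mod p) {0..H}"
  proof (rule inj_onI)
    fix x y assume "x \<in> {0..H}" "y \<in> {0..H}" "x^2 mod p = y^2 mod p"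
    then show "x = y" using prime_square_cong_imp_eq[OF p(1)] half unfolding cong_def by blast
  qed
  have inj_neg_sq: "inj_on (\<lambda>y. (-1 - y^2) mod p) {0..H}"
  proof (rule inj_onI)
    fix x y assume xy: "x \<in> {0..H}" "y \<in> {0..H}" "(-1 - x^2) mod p = (-1 - y^2) mod p"
    then have "p dvd (-1 - x^2) - (-1 - y^2)" by (simp add: mod_eq_dvd_iff)
    then have "[y^2 = x^2] (mod p)" by (simp add: cong_iff_dvd_diff)
    then show "x = y" using prime_square_cong_imp_eq[OF p(1)] half xy(1,2) by (metis cong_sym)
  qed
  define A where "A = (\<lambda>x. x^2 mod p) ` {0..H}"
  define B where "B = (\<lambda>y. (-1 - y^2) mod p) ` {0..H}"
  have "card A + card B = p + 1"
    unfolding A_def B_def using inj_sq inj_neg_sq H by (simp add: card_image)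
  moreover have "card (A \<union> B) \<le> p"
  proof -
    have "A \<union> B \<subseteq> {0..<p}" unfolding A_def B_def using \<open>0 < p\<close> by auto
    then show ?thesis using card_mono[of "{0..<p}" "A \<union> B"] \<open>0 < p\<close> by simp
  qed
  ultimately have "A \<inter> B \<noteq> {}" using card_Un_disjoint[of A B] unfolding A_def B_def by auto
  then obtain x y where "x^2 mod p = (-1 - y^2) mod p" unfolding A_def B_def by auto
  then have "p dvd x^2 - (-1 - y^2)" by (simp add: mod_eq_dvd_iff)
  then have "p dvd x^2 + y^2 + 1" by (simp add: algebra_simps)
  then show ?thesis by blast
qed

lemma dvd_two_squares_plus_one_mult_coprime:
  fixes n1 n2 :: int
  assumes "coprime n1 n2" "n1 dvd c1^2 + d1^2 + 1" "n2 dvd c2^2 + d2^2 + 1"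
  shows "\<exists>c d. n1 * n2 dvd c^2 + d^2 + 1"
proof -
  obtain c where c: "[c = c1] (mod n1)" "[c = c2] (mod n2)"
    using binary_chinese_remainder_int[OF assms(1)] by blast
  obtain d where d: "[d = d1] (mod n1)" "[d = d2] (mod n2)"
    using binary_chinese_remainder_int[OF assms(1)] by blast
  have "[c^2 + d^2 + 1 = c1^2 + d1^2 + 1] (mod n1)"
    using c(1) d(1) by (intro cong_add cong_pow cong_refl)
  moreover have "[c^2 + d^2 + 1 = c2^2 + d2^2 + 1] (mod n2)"
    using c(2) d(2) by (intro cong_add cong_pow cong_refl)
  ultimately have "n1 dvd c^2 + d^2 + 1" "n2 dvd c^2 + d^2 + 1"
    using assms(2,3) by (simp_all add: cong_dvd_iff)
  then show ?thesis using divides_mult[OF _ _ assms(1)] by blast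
qed

lemma dvd_two_squares_plus_one_mult_prime:
  fixes p n :: int
  assumes p: "prime p" "odd p" and "p dvd n" and n: "n dvd c^2 + d^2 + 1"
  shows "\<exists>c d. p * n dvd c^2 + d^2 + 1"
proof -
  have lift: "\<exists>c'. p * n dvd c'^2 + d^2 + 1" if c: "\<not> p dvd c" and cd: "n dvd c^2 + d^2 + 1" for c d
  proof -
    \<comment> \<open>Hensel step: \<open>(c + n u)^2 + d^2 + 1 = n (q + 2 c u) + n^2 u^2\<close>, and \<open>2 c\<close> is
      invertible mod \<open>p\<close>.\<close>
    obtain q where q: "c^2 + d^2 + 1 = n * q" using cd by blast
    have "coprime c p" using c p(1) prime_imp_coprime_int coprime_commute by blast
    moreover have "coprime 2 p" using p(2) by simp
    ultimately have "coprime (2 * c) p" by simp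
    then obtain w where w: "[2 * c * w = 1] (mod p)" using cong_solve_coprime_int by blast
    define u where "u = - q * w"
    have "p dvd q * (1 - 2 * c * w)"
      using w by (simp add: cong_iff_dvd_diff dvd_diff_commute)
    then have "p dvd q * (1 - 2 * c * w) + n * u^2" using \<open>p dvd n\<close> by simp
    then have "p * n dvd n * (q * (1 - 2 * c * w) + n * u^2)" by (simp add: mult.commute)
    also have "n * (q * (1 - 2 * c * w) + n * u^2) = (c + n * u)^2 + d^2 + 1"
      unfolding u_def using q by (simp add: power2_eq_square algebra_simps)
    finally show ?thesis by blast
  qed
  have "\<not> p dvd c \<or> \<not> p dvd d"
  proof (rule ccontr)
    assume "\<not> ?thesis"
    then have "p dvd c^2 + d^2" by (simp add: power2_eq_square)
    moreover have "p dvd c^2 + d^2 + 1" using \<open>p dvd n\<close> n by (rule dvd_trans)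
    ultimately have "p dvd 1" by (simp add: dvd_add_right_iff)
    then show False using p(1) not_prime_unit by blast
  qed
  then show ?thesis
  proof
    assume "\<not> p dvd c"
    then show ?thesis using lift n by blast
  next
    assume "\<not> p dvd d"
    then obtain d' where "p * n dvd d'^2 + c^2 + 1" using lift[of d c] n by (auto simp: add_ac)
    then show ?thesis by (auto simp: add_ac)
  qed
qed

lemma odd_dvd_two_squares_plus_one:
  fixes n :: int
  shows "odd n \<Longrightarrow> \<exists>c d. n dvd c^2 + d^2 + 1"
proof (induction n rule: prime_divisors_induct)
  case zero
  then show ?case by simp
next
  case (unit n)
  then show ?case by (intro exI[of _ 0]) (simp add: unit_imp_dvd)
next
  case (factor p n)
  then have "odd p" "odd n" by auto
  with factor.IH obtain c d where cd: "n dvd c^2 + d^2 + 1" by blast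
  show ?case
  proof (cases "p dvd n")
    case True
    show ?thesis by (rule dvd_two_squares_plus_one_mult_prime[OF factor.hyps \<open>odd p\<close> True cd])
  next
    case False
    then have "coprime p n" using factor.hyps by (simp add: prime_imp_coprime_int)
    moreover obtain c1 d1 where "p dvd c1^2 + d1^2 + 1"
      using prime_dvd_two_squares_plus_one[OF factor.hyps \<open>odd p\<close>] by blast
    ultimately show ?thesis using dvd_two_squares_plus_one_mult_coprime cd by blast
  qed
qed

lemma sum3sq_mod_odd:
  fixes n r :: int
  assumes "odd n"
  shows "sum3sq_mod n r"
proof -
  \<comment> \<open>With \<open>2h \<equiv> 1\<close> and \<open>c^2 + d^2 \<equiv> -1\<close>, the triple \<open>((r+1)h, c(r-1)h, d(r-1)h)\<close> has
    square sum \<open>\<equiv> ((r+1)^2 - (r-1)^2) h^2 = r (2h)^2 \<equiv> r\<close>.\<close>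
  obtain c d where cd: "n dvd c^2 + d^2 + 1" using odd_dvd_two_squares_plus_one assms by blast
  have "coprime 2 n" using assms by simp
  then obtain h where "[2 * h = 1] (mod n)" using cong_solve_coprime_int by blast
  then have h: "n dvd 2 * h - 1" by (simp add: cong_iff_dvd_diff)
  define u where "u = (r + 1) * h"
  define v where "v = (r - 1) * h"
  have "u^2 + (c * v)^2 + (d * v)^2 - r = r * (2 * h - 1) * (2 * h + 1) + v^2 * (c^2 + d^2 + 1)"
    unfolding u_def v_def by (simp add: power2_eq_square algebra_simps)
  moreover have "n dvd r * (2 * h - 1) * (2 * h + 1) + v^2 * (c^2 + d^2 + 1)"
    using h cd by (intro dvd_add) (auto intro: dvd_mult dvd_mult2)
  ultimately have "[u^2 + (c * v)^2 + (d * v)^2 = r] (mod n)" by (simp add: cong_iff_dvd_diff)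
  then show ?thesis unfolding sum3sq_mod_def by blast
qed

lemma sum3sq_mod_mult_coprime:
  fixes m1 m2 r :: int
  assumes "coprime m1 m2" "sum3sq_mod m1 r" "sum3sq_mod m2 r"
  shows "sum3sq_mod (m1 * m2) r"
proof -
  obtain x1 y1 z1 where 1: "[x1^2 + y1^2 + z1^2 = r] (mod m1)"
    using assms(2) unfolding sum3sq_mod_def by blast
  obtain x2 y2 z2 where 2: "[x2^2 + y2^2 + z2^2 = r] (mod m2)"
    using assms(3) unfolding sum3sq_mod_def by blast
  obtain x where x: "[x = x1] (mod m1)" "[x = x2] (mod m2)"
    using binary_chinese_remainder_int[OF assms(1)] by blast
  obtain y where y: "[y = y1] (mod m1)" "[y = y2] (mod m2)"
    using binary_chinese_remainder_int[OF assms(1)] by blast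
  obtain z where z: "[z = z1] (mod m1)" "[z = z2] (mod m2)"
    using binary_chinese_remainder_int[OF assms(1)] by blast
  have "[x^2 + y^2 + z^2 = x1^2 + y1^2 + z1^2] (mod m1)"
    using x(1) y(1) z(1) by (intro cong_add cong_pow)
  then have "[x^2 + y^2 + z^2 = r] (mod m1)" using 1 by (rule cong_trans)
  moreover have "[x^2 + y^2 + z^2 = x2^2 + y2^2 + z2^2] (mod m2)"
    using x(2) y(2) z(2) by (intro cong_add cong_pow)
  then have "[x^2 + y^2 + z^2 = r] (mod m2)" using 2 by (rule cong_trans)
  ultimately have "m1 * m2 dvd x^2 + y^2 + z^2 - r"
    using divides_mult assms(1) unfolding cong_iff_dvd_diff by blast
  then show ?thesis unfolding sum3sq_mod_def cong_iff_dvd_diff by blast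
qed

lemma sum3sq_mod_of_mod_8:
  fixes m s :: int
  assumes "m \<noteq> 0" "s mod 4 \<noteq> 0" "s mod 8 \<noteq> 7"
  shows "sum3sq_mod m s"
proof -
  define e where "e = multiplicity 2 m"
  obtain q where m: "m = 2^e * q" and q: "odd q"
    using multiplicity_decompose'[of m 2] assms(1) unfolding e_def by (simp, blast)
  have "coprime (2^e) q" using q by simp
  from sum3sq_mod_mult_coprime[OF this sum3sq_mod_pow2 sum3sq_mod_odd] show ?thesis
    using assms(2,3) q m by simp
qed

lemma exists_squarefree_sum3sq_mod_cong:
  fixes m a :: int
  assumes m: "0 < m" and a: "0 \<le> a" "a < m" "sum3sq_mod m a"
  shows "\<exists>k s. 1 \<le> k \<and> k < 4*m \<and> squarefree s \<and> 1 \<le> s \<and> s < 4*m \<and> sum3sq_mod m s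
           \<and> [k^2 * s = a] (mod m)"
proof -
  obtain N where N: "1 \<le> N" "N < 4*m" "[N = a] (mod m)" "\<not> legendre_form N"
    using exists_cong_not_legendre_form[OF assms] by blast
  define s where "s = squarefree_part N"
  define k where "k = square_part N"
  have Nsk: "N = k^2 * s"
    unfolding s_def k_def by (subst squarefree_decompose) (simp add: mult.commute)
  have "0 \<le> k" unfolding k_def by (metis abs_ge_zero normalize_square_part normalize_int_def)
  moreover have "k \<noteq> 0" unfolding k_def using N(1) by simp
  ultimately have k: "1 \<le> k" by simp
  then have k2: "1 \<le> k^2" by (rule one_le_power)
  have "0 < k^2 * s" using Nsk N(1) by simp
  with k2 have s: "1 \<le> s" by (simp add: zero_less_mult_iff)
  have "k * 1 \<le> k * k" "1 * s \<le> k^2 * s" "k^2 * 1 \<le> k^2 * s"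
    using k k2 s by (intro mult_left_mono mult_right_mono; simp)+
  then have "k \<le> N" "s \<le> N" using Nsk by (simp_all add: power2_eq_square)
  have sf: "squarefree s" unfolding s_def by simp
  then have "s mod 4 \<noteq> 0" using squarefreeD[of s 2] by auto
  moreover have "s mod 8 \<noteq> 7"
  proof
    assume "s mod 8 = 7"
    moreover from this have "odd s" by presburger
    ultimately have "legendre_form s" using legendre_form_pow2_mult_odd_iff[of s 0] by simp
    then have "legendre_form N" unfolding Nsk using k by (intro legendre_form_mult_square) auto
    with N(4) show False by blast
  qed
  ultimately have "sum3sq_mod m s" using m by (intro sum3sq_mod_of_mod_8) auto
  moreover have "k < 4*m" "s < 4*m" "[k^2 * s = a] (mod m)" using N \<open>k \<le> N\<close> \<open>s \<le> N\<close> Nsk by auto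
  ultimately show ?thesis using k s sf by blast
qed

section \<open>Scaling representations by a square\<close>

definition sum3sq_reps :: "nat \<Rightarrow> (int \<times> int \<times> int) set" where
  "sum3sq_reps n = {(x, y, z). x^2 + y^2 + z^2 = int n}"

lemma r3_eq_card_sum3sq_reps: "r3 n = card (sum3sq_reps n)"
  unfolding r3_def sum3sq_reps_def by (rule arg_cong[where f = card]) auto

lemma abs_le_sum3sq:
  fixes x y z :: int
  shows "\<bar>x\<bar> \<le> x^2 + y^2 + z^2"
proof -
  have "\<bar>x\<bar> \<le> x^2"
  proof (cases "x = 0")
    case False
    then have "\<bar>x\<bar> * 1 \<le> \<bar>x\<bar> * \<bar>x\<bar>" by (intro mult_left_mono) auto
    then show ?thesis by (simp add: power2_eq_square abs_mult_self_eq)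
  qed simp
  then show ?thesis by (simp add: add_increasing2)
qed

lemma finite_sum3sq_reps: "finite (sum3sq_reps n)"
proof (rule finite_subset)
  let ?I = "{-int n..int n}"
  show "sum3sq_reps n \<subseteq> ?I \<times> ?I \<times> ?I"
  proof (clarsimp simp: sum3sq_reps_def)
    fix x y z :: int assume n: "x^2 + y^2 + z^2 = int n"
    have "\<bar>x\<bar> \<le> int n" "\<bar>y\<bar> \<le> int n" "\<bar>z\<bar> \<le> int n"
      using abs_le_sum3sq[of x y z] abs_le_sum3sq[of y z x] abs_le_sum3sq[of z x y] n
      by (simp_all add: add_ac)
    then show "- int n \<le> x \<and> x \<le> int n \<and> - int n \<le> y \<and> y \<le> int n \<and> - int n \<le> z \<and> z \<le> int n"
      by auto
  qed
qed simp

lemma r3_le_r3_square_mult: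
  assumes "1 \<le> k"
  shows "r3 n \<le> r3 (k^2 * n)"
proof -
  define scale where "scale = (\<lambda>(x, y, z). (int k * x, int k * y, int k * z))"
  have "inj scale" using assms by (auto simp: scale_def inj_def)
  moreover have "scale ` sum3sq_reps n \<subseteq> sum3sq_reps (k^2 * n)"
    by (auto simp: scale_def sum3sq_reps_def power_mult_distrib simp flip: distrib_left)
  ultimately show ?thesis
    unfolding r3_eq_card_sum3sq_reps
    by (intro card_inj_on_le[OF _ _ finite_sum3sq_reps]) (auto intro: inj_on_subset)
qed

lemma ln_ln_mult_le:
  fixes K x :: real
  assumes "1 \<le> K" "K \<le> x" "exp 2 \<le> x"
  shows "0 \<le> ln (ln (K * x))" "ln (ln (K * x)) \<le> 2 * ln (ln x)"
proof -
  have x: "0 < x" "2 \<le> ln x" using assms by (auto simp: ln_ge_iff)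
  have "ln x \<le> ln (K * x)" using assms x by simp
  with x show "0 \<le> ln (ln (K * x))" by simp
  have "ln (K * x) \<le> ln (x * x)" using assms x by (intro ln_mono) (auto intro: mult_right_mono)
  also have "\<dots> = 2 * ln x" using x by (simp add: ln_mult_pos)
  finally have "ln (ln (K * x)) \<le> ln (2 * ln x)" using \<open>ln x \<le> ln (K * x)\<close> x by (intro ln_mono) auto
  also have "\<dots> = ln 2 + ln (ln x)" using x(2) by (intro ln_mult_pos) auto
  also have "\<dots> \<le> 2 * ln (ln x)" using x(2) by (simp add: ln_mono)
  finally show "ln (ln (K * x)) \<le> 2 * ln (ln x)" .
qed

lemma exp_2_le_9: "exp 2 \<le> (9::real)"
proof -
  have "exp (2::real) = exp 1 * exp 1" by (simp flip: exp_add)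
  also have "\<dots> \<le> 3 * 3" using exp_le by (intro mult_mono) auto
  finally show ?thesis by simp
qed

lemma many_large_mult_square:
  fixes k :: nat and s a m :: int and c c' :: real
  assumes k: "1 \<le> k" and cong: "[int (k^2) * s = a] (mod m)"
    and c: "0 \<le> c" "c' \<le> c / (2 * k)" and large: "many_large m s c"
  shows "many_large m a c'"
proof -
  define S where "S d b = {n :: nat. n > 0 \<and> [int n = b] (mod m) \<and>
     real (r3 n) \<ge> d * sqrt (real n) * ln (ln (real n))}" for d b
  define T where "T = S c s - {..<max (k^2) 9}"
  have "infinite T" using large unfolding T_def S_def many_large_def by (simp add: finite_Diff2)
  moreover have "inj_on (\<lambda>n. k^2 * n) T" using k by (auto intro!: inj_onI)
  moreover have "(\<lambda>n. k^2 * n) ` T \<subseteq> S c' a"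
  proof clarify
    fix n assume "n \<in> T"
    then have n: "0 < n" "[int n = s] (mod m)" "c * sqrt (real n) * ln (ln (real n)) \<le> real (r3 n)"
      and big: "real (k^2) \<le> real n" "exp 2 \<le> real n"
      using exp_2_le_9 unfolding T_def S_def by auto
    have "[int (k^2 * n) = int (k^2) * s] (mod m)" using n(2) by (simp add: cong_scalar_left)
    then have cong_a: "[int (k^2 * n) = a] (mod m)" using cong by (rule cong_trans)
    note L = ln_ln_mult_le[OF _ big]
    have "c' * sqrt (real (k^2 * n)) * ln (ln (real (k^2 * n)))
        = (c' * k) * (sqrt (real n) * ln (ln (real (k^2) * real n)))"
      by (simp add: real_sqrt_mult)
    also have "\<dots> \<le> (c / 2) * (sqrt (real n) * ln (ln (real (k^2) * real n)))"
      using c k L(1) by (intro mult_right_mono) (auto simp: field_simps)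
    also have "\<dots> \<le> (c / 2) * (sqrt (real n) * (2 * ln (ln (real n))))"
      using c k L(2) by (intro mult_left_mono) auto
    also have "\<dots> \<le> real (r3 n)" using n(3) by simp
    also have "\<dots> \<le> real (r3 (k^2 * n))" using r3_le_r3_square_mult[OF k] by simp
    finally show "k^2 * n \<in> S c' a" unfolding S_def using n(1) k cong_a by auto
  qed
  ultimately have "infinite (S c' a)" by (metis finite_imageD finite_subset)
  then show ?thesis unfolding many_large_def S_def by simp
qed

theorem lemma3p1:
  fixes m :: int
  assumes "m > 0"
  shows "\<exists>C :: real \<Rightarrow> real. (\<forall>c > 0. C c > 0) \<and>
    (\<forall>a. 0 \<le> a \<and> a < m \<and> sum3sq_mod m a \<longrightarrow>
      (\<exists>a'. squarefree a' \<and> 1 \<le> a' \<and> a' \<le> 5 * m \<and> sum3sq_mod m a' \<and>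
        (\<forall>c > 0. many_large m a' c \<longrightarrow> many_large m a (C c))))"
proof (intro exI[of _ "\<lambda>c. c / (8 * m)"] conjI allI impI)
  show "c / (8 * m) > 0" if "c > 0" for c :: real using that assms by simp
  fix a assume a: "0 \<le> a \<and> a < m \<and> sum3sq_mod m a"
  then obtain k s where ks: "1 \<le> k" "k < 4*m" "squarefree s" "1 \<le> s" "s < 4*m" "sum3sq_mod m s"
      "[k^2 * s = a] (mod m)"
    using exists_squarefree_sum3sq_mod_cong[OF assms] by blast
  have "many_large m a (c / (8 * m))" if "c > 0" "many_large m s c" for c :: real
  proof (rule many_large_mult_square[of "nat k"])
    show "c / (8 * m) \<le> c / (2 * nat k)" using ks(1,2) that(1) by (intro divide_left_mono) auto
  qed (use ks that in auto)
  with ks show "\<exists>a'. squarefree a' \<and> 1 \<le> a' \<and> a' \<le> 5 * m \<and> sum3sq_mod m a' \<and>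
        (\<forall>c > 0. many_large m a' c \<longrightarrow> many_large m a (c / (8 * m)))" by auto
qed

end
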